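(* Let $G=(V,E,\gamma,c)$ be a typed DAG task executed on a platform with $M_s\ge 1$ cores of each type $s\in S$ under a work-conserving scheduling algorithm. Let $\pi=(\tau_1,\dots,\tau_k)$ be a critical path of an arbitrary execution sequence of $G$, with finish times $f(\cdot)$. Set $f(\tau_0):=0$, and for $1\le i\le k$ let $I_i=f(\tau_i)-f(\tau_{i-1})$, let $x_i$ be the total length of the time within $[f(\tau_{i-1}),f(\tau_i))$ during which $\tau_i$ is executing, and let $y_i=I_i-x_i$ be the total length of the time within that interval during which $\tau_i$ is not executing. For $s\in S$ let $\mathcal{X}_s=\sum_{i:\gamma(\tau_i)=s}x_i$ and $\mathcal{Y}_s=\sum_{i:\gamma(\tau_i)=s}y_i$. Then for every $s\in S$: \[ \mathcal{X}_s\le \sum_{j:\,\gamma(\tau_j)=s} c(\tau_j),\qquad \mathcal{Y}_s\le \frac{1}{M_s}\Big(vol_s(G)-\sum_{j:\,\gamma(\tau_j)=s} c(\tau_j)\Big). \]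
   Context: A typed DAG task is $G=(V,E,\gamma,c)$ where $(V,E)$ is a finite directed acyclic graph with a unique source vertex $v_{src}$ (no predecessors) and a unique sink vertex $v_{snk}$ (no successors), $S$ is a finite set of core types, $\gamma:V\to S$ gives the type of each vertex, and $c:V\to\mathbb{R}_{\ge 0}$ gives the worst-case execution time (WCET) of each vertex. The platform has, for each $s\in S$, $M_s\ge1$ cores of type $s$. For $u\in V$, $\mathrm{pre}(u)$ denotes its set of (immediate) predecessors. A complete path is a path of $G$ from $v_{src}$ to $v_{snk}$. $vol_s(G)=\sum_{u\in V,\gamma(u)=s}c(u)$. Runtime model: a vertex becomes eligible when all its predecessors have finished (the source is eligible at time $0$); a vertex $v$ may only execute on cores of type $\gamma(v)$, one core at a time, for a total execution time of at most $c(v)$ (possibly less), and it finishes when its execution is complete. Scheduling is work-conserving: an eligible unfinished vertex of type $s$ must be executing whenever some core of type $s$ is available (i.e., if such a vertex is not executing, all $M_s$ cores of type $s$ are busy). An execution sequence is any resulting trace of which vertex executes when; $f(v)$ denotes the finish time of $v$ in it. A critical path of an execution sequence is a complete path $\pi=(\tau_1,\dots,\tau_k)$ such that for every $2\le i\le k$, $f(\tau_{i-1})=\max_{u\in\mathrm{pre}(\tau_i)}f(u)$. *)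

theory Defs
  imports "HOL-Analysis.Analysis"
begin

definition pre :: "('v \<times> 'v) set \<Rightarrow> 'v \<Rightarrow> 'v set" where
  "pre E u = {w. (w, u) \<in> E}"

definition succ :: "('v \<times> 'v) set \<Rightarrow> 'v \<Rightarrow> 'v set" where
  "succ E u = {w. (u, w) \<in> E}"

definition typed_dag_task ::
  "'v set \<Rightarrow> ('v \<times> 'v) set \<Rightarrow> 's set \<Rightarrow> ('v \<Rightarrow> 's) \<Rightarrow> ('v \<Rightarrow> real) \<Rightarrow> 'v \<Rightarrow> 'v \<Rightarrow> bool" where
  "typed_dag_task V E S \<gamma> c src snk \<longleftrightarrow>
     finite V \<and> E \<subseteq> V \<times> V \<and> acyclic E \<and> finite S \<and>
     (\<forall>v\<in>V. \<gamma> v \<in> S) \<and> (\<forall>v\<in>V. 0 \<le> c v) \<and>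
     src \<in> V \<and> pre E src = {} \<and> (\<forall>v\<in>V. pre E v = {} \<longrightarrow> v = src) \<and>
     snk \<in> V \<and> succ E snk = {} \<and> (\<forall>v\<in>V. succ E v = {} \<longrightarrow> v = snk)"

definition vol :: "'v set \<Rightarrow> ('v \<Rightarrow> 's) \<Rightarrow> ('v \<Rightarrow> real) \<Rightarrow> 's \<Rightarrow> real" where
  "vol V \<gamma> c s = (\<Sum>u\<in>{u\<in>V. \<gamma> u = s}. c u)"

text \<open>A schedule: sched t s j = Some v means that at time t core number j (j < M s)
  of type s executes vertex v; None means that core is idle.\<close>
definition executing :: "(real \<Rightarrow> 's \<Rightarrow> nat \<Rightarrow> 'v option) \<Rightarrow> 'v \<Rightarrow> real \<Rightarrow> bool" where
  "executing sched v t \<longleftrightarrow> (\<exists>s j. sched t s j = Some v)"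

definition exec_set :: "(real \<Rightarrow> 's \<Rightarrow> nat \<Rightarrow> 'v option) \<Rightarrow> 'v \<Rightarrow> real set" where
  "exec_set sched v = {t. executing sched v t}"

definition release :: "('v \<times> 'v) set \<Rightarrow> ('v \<Rightarrow> real) \<Rightarrow> 'v \<Rightarrow> real" where
  "release E f v = (if pre E v = {} then 0 else Max (f ` pre E v))"

definition exec_seq ::
  "'v set \<Rightarrow> ('v \<times> 'v) set \<Rightarrow> ('v \<Rightarrow> 's) \<Rightarrow> ('v \<Rightarrow> real) \<Rightarrow> ('s \<Rightarrow> nat)
   \<Rightarrow> (real \<Rightarrow> 's \<Rightarrow> nat \<Rightarrow> 'v option) \<Rightarrow> ('v \<Rightarrow> real) \<Rightarrow> bool" where
  "exec_seq V E \<gamma> c M sched f \<longleftrightarrow>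
     \<comment> \<open>a vertex only runs on an existing core of its own type\<close>
     (\<forall>t s j v. sched t s j = Some v \<longrightarrow> v \<in> V \<and> \<gamma> v = s \<and> j < M s) \<and>
     \<comment> \<open>one core at a time\<close>
     (\<forall>t s j j' v. sched t s j = Some v \<and> sched t s j' = Some v \<longrightarrow> j = j') \<and>
     \<comment> \<open>executes only while eligible and unfinished\<close>
     (\<forall>v\<in>V. release E f v \<le> f v) \<and>
     (\<forall>v\<in>V. exec_set sched v \<subseteq> {release E f v ..< f v}) \<and>
     (\<forall>v\<in>V. exec_set sched v \<in> sets lborel) \<and>
     \<comment> \<open>total execution time at most the WCET\<close>
     (\<forall>v\<in>V. measure lborel (exec_set sched v) \<le> c v) \<and>
     \<comment> \<open>it finishes exactly when its execution is complete\<close>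
     (\<forall>v\<in>V. \<forall>t. release E f v \<le> t \<and> t < f v \<longrightarrow>
         measure lborel (exec_set sched v \<inter> {..t}) < measure lborel (exec_set sched v)) \<and>
     \<comment> \<open>work-conserving\<close>
     (\<forall>v\<in>V. \<forall>t. release E f v \<le> t \<and> t < f v \<and> \<not> executing sched v t \<longrightarrow>
         (\<forall>j < M (\<gamma> v). sched t (\<gamma> v) j \<noteq> None))"

definition complete_path :: "('v \<times> 'v) set \<Rightarrow> 'v \<Rightarrow> 'v \<Rightarrow> 'v list \<Rightarrow> bool" where
  "complete_path E src snk \<pi> \<longleftrightarrow> \<pi> \<noteq> [] \<and> hd \<pi> = src \<and> last \<pi> = snk \<and>
     (\<forall>i. Suc i < length \<pi> \<longrightarrow> (\<pi> ! i, \<pi> ! Suc i) \<in> E)"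

definition critical_path ::
  "('v \<times> 'v) set \<Rightarrow> 'v \<Rightarrow> 'v \<Rightarrow> ('v \<Rightarrow> real) \<Rightarrow> 'v list \<Rightarrow> bool" where
  "critical_path E src snk f \<pi> \<longleftrightarrow> complete_path E src snk \<pi> \<and>
     (\<forall>i. 0 < i \<and> i < length \<pi> \<longrightarrow> f (\<pi> ! (i - 1)) = Max (f ` pre E (\<pi> ! i)))"

text \<open>Paper indices 1..k correspond to list indices 0..k-1; f(tau_0) := 0.\<close>
definition prev_finish :: "('v \<Rightarrow> real) \<Rightarrow> 'v list \<Rightarrow> nat \<Rightarrow> real" where
  "prev_finish f \<pi> i = (if i = 0 then 0 else f (\<pi> ! (i - 1)))"

definition path_x :: "(real \<Rightarrow> 's \<Rightarrow> nat \<Rightarrow> 'v option) \<Rightarrow> ('v \<Rightarrow> real) \<Rightarrow> 'v list \<Rightarrow> nat \<Rightarrow> real" where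
  "path_x sched f \<pi> i =
     measure lborel (exec_set sched (\<pi> ! i) \<inter> {prev_finish f \<pi> i ..< f (\<pi> ! i)})"

definition path_y :: "(real \<Rightarrow> 's \<Rightarrow> nat \<Rightarrow> 'v option) \<Rightarrow> ('v \<Rightarrow> real) \<Rightarrow> 'v list \<Rightarrow> nat \<Rightarrow> real" where
  "path_y sched f \<pi> i = (f (\<pi> ! i) - prev_finish f \<pi> i) - path_x sched f \<pi> i"

end

theory Submission
  imports Defs
begin

text \<open>Within the window \<open>[f(\<tau>\<^sub>i\<^sub>-\<^sub>1), f(\<tau>\<^sub>i))\<close> the vertex \<open>\<tau>\<^sub>i\<close> is eligible, because on a
  critical path \<open>\<tau>\<^sub>i\<^sub>-\<^sub>1\<close> is the last predecessor of \<open>\<tau>\<^sub>i\<close> to finish. Hence \<open>\<tau>\<^sub>i\<close> executes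
  only inside its window, which gives the bound on \<open>X\<^sub>s\<close>, and whenever it does not execute
  inside its window, work conservation keeps all \<open>M\<^sub>s\<close> cores of its type busy. The windows
  of distinct path vertices are disjoint, so at such an instant those \<open>M\<^sub>s\<close> cores run
  \<open>M\<^sub>s\<close> distinct vertices of type \<open>s\<close> that lie off the path. Integrating this pointwise
  count over time gives \<open>M\<^sub>s Y\<^sub>s \<le> \<Sum>\<^sub>v c(v)\<close>, the sum ranging over the vertices of type \<open>s\<close>
  off the path, which is \<open>vol\<^sub>s(G)\<close> minus the path's share since a path in a DAG is
  simple.\<close>

lemma trancl_path_nth:
  assumes "\<forall>i. Suc i < length \<pi> \<longrightarrow> (\<pi> ! i, \<pi> ! Suc i) \<in> E"
  shows "i < j \<Longrightarrow> j < length \<pi> \<Longrightarrow> (\<pi> ! i, \<pi> ! j) \<in> E\<^sup>+"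
proof (induction j)
  case 0
  then show ?case by simp
next
  case (Suc j)
  have edge: "(\<pi> ! j, \<pi> ! Suc j) \<in> E"
    using assms Suc.prems by auto
  show ?case
  proof (cases "i = j")
    case True
    then show ?thesis using edge by auto
  next
    case False
    then have "(\<pi> ! i, \<pi> ! j) \<in> E\<^sup>+"
      using Suc by auto
    then show ?thesis
      using edge by (rule trancl_into_trancl)
  qed
qed

lemma distinct_path_if_acyclic:
  assumes "\<forall>i. Suc i < length \<pi> \<longrightarrow> (\<pi> ! i, \<pi> ! Suc i) \<in> E" and "acyclic E"
  shows "distinct \<pi>"
proof -
  have "\<pi> ! i \<noteq> \<pi> ! j" if "i < j" "j < length \<pi>" for i j
    using trancl_path_nth[OF assms(1) that] assms(2) by (auto simp: acyclic_def)
  then show ?thesis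
    unfolding distinct_conv_nth by (metis linorder_neqE_nat)
qed

lemma sum_measure_le_if_sum_indicator_le:
  fixes A :: "'i \<Rightarrow> 'a set" and B :: "'j \<Rightarrow> 'a set"
  assumes "finite I" and "finite J"
    and "\<And>i. i \<in> I \<Longrightarrow> A i \<in> sets M \<and> emeasure M (A i) < \<infinity>"
    and "\<And>j. j \<in> J \<Longrightarrow> B j \<in> sets M \<and> emeasure M (B j) < \<infinity>"
    and "\<And>x. r * (\<Sum>i\<in>I. indicator (A i) x) \<le> (\<Sum>j\<in>J. indicator (B j) x :: real)"
  shows "r * (\<Sum>i\<in>I. measure M (A i)) \<le> (\<Sum>j\<in>J. measure M (B j))"
proof -
  have int_A: "integrable M (indicator (A i) :: 'a \<Rightarrow> real)" if "i \<in> I" for i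
    using assms(3)[OF that] by simp
  have int_B: "integrable M (indicator (B j) :: 'a \<Rightarrow> real)" if "j \<in> J" for j
    using assms(4)[OF that] by simp
  have "r * (\<Sum>i\<in>I. measure M (A i)) = integral\<^sup>L M (\<lambda>x. r * (\<Sum>i\<in>I. indicator (A i) x))"
    using assms(3) int_A by (simp add: Bochner_Integration.integral_sum Int_absorb2 sets.sets_into_space)
  also have "\<dots> \<le> integral\<^sup>L M (\<lambda>x. \<Sum>j\<in>J. indicator (B j) x)"
    by (rule integral_mono) (use int_A int_B assms(5) in auto)
  also have "\<dots> = (\<Sum>j\<in>J. measure M (B j))"
    using assms(4) int_B by (simp add: Bochner_Integration.integral_sum Int_absorb2 sets.sets_into_space)
  finally show ?thesis .
qed

lemma exec_seq_sched_SomeD: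
  "exec_seq V E \<gamma> c M sched f \<Longrightarrow> sched t s j = Some v \<Longrightarrow> v \<in> V \<and> \<gamma> v = s \<and> j < M s"
  by (simp add: exec_seq_def)

lemma exec_seq_core_unique:
  "exec_seq V E \<gamma> c M sched f \<Longrightarrow> sched t s j = Some v \<Longrightarrow> sched t s j' = Some v \<Longrightarrow> j = j'"
  by (simp add: exec_seq_def) blast

lemma exec_seq_release_le_finish:
  "exec_seq V E \<gamma> c M sched f \<Longrightarrow> v \<in> V \<Longrightarrow> release E f v \<le> f v"
  by (simp add: exec_seq_def)

lemma exec_seq_exec_set_subset:
  "exec_seq V E \<gamma> c M sched f \<Longrightarrow> v \<in> V \<Longrightarrow> exec_set sched v \<subseteq> {release E f v ..< f v}"
  by (simp add: exec_seq_def)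

lemma exec_seq_exec_set_measurable:
  "exec_seq V E \<gamma> c M sched f \<Longrightarrow> v \<in> V \<Longrightarrow> exec_set sched v \<in> sets lborel"
  by (simp add: exec_seq_def)

lemma exec_seq_measure_exec_set_le:
  "exec_seq V E \<gamma> c M sched f \<Longrightarrow> v \<in> V \<Longrightarrow> measure lborel (exec_set sched v) \<le> c v"
  by (simp add: exec_seq_def)

lemma exec_seq_work_conserving:
  "exec_seq V E \<gamma> c M sched f \<Longrightarrow> v \<in> V \<Longrightarrow> release E f v \<le> t \<Longrightarrow> t < f v \<Longrightarrow>
    \<not> executing sched v t \<Longrightarrow> j < M (\<gamma> v) \<Longrightarrow> sched t (\<gamma> v) j \<noteq> None"
  by (simp add: exec_seq_def)

lemma exec_seq_emeasure_exec_set_finite: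
  assumes "exec_seq V E \<gamma> c M sched f" and "v \<in> V"
  shows "emeasure lborel (exec_set sched v) < \<infinity>"
proof -
  have "bounded (exec_set sched v)"
    by (rule bounded_subset[OF _ exec_seq_exec_set_subset[OF assms]]) simp
  then show ?thesis
    by (rule emeasure_bounded_finite)
qed

definition path_window :: "('v \<Rightarrow> real) \<Rightarrow> 'v list \<Rightarrow> nat \<Rightarrow> real set" where
  "path_window f \<pi> i = {prev_finish f \<pi> i ..< f (\<pi> ! i)}"

definition idle_set ::
  "(real \<Rightarrow> 's \<Rightarrow> nat \<Rightarrow> 'v option) \<Rightarrow> ('v \<Rightarrow> real) \<Rightarrow> 'v list \<Rightarrow> nat \<Rightarrow> real set" where
  "idle_set sched f \<pi> i = path_window f \<pi> i - exec_set sched (\<pi> ! i)"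

locale critical_path_execution =
  fixes V :: "'v set" and E :: "('v \<times> 'v) set" and S :: "'s set"
    and \<gamma> :: "'v \<Rightarrow> 's" and c :: "'v \<Rightarrow> real" and src snk :: 'v
    and M :: "'s \<Rightarrow> nat" and sched :: "real \<Rightarrow> 's \<Rightarrow> nat \<Rightarrow> 'v option"
    and f :: "'v \<Rightarrow> real" and \<pi> :: "'v list"
  assumes task: "typed_dag_task V E S \<gamma> c src snk"
    and exec: "exec_seq V E \<gamma> c M sched f"
    and critical: "critical_path E src snk f \<pi>"
begin

definition off_path :: "'s \<Rightarrow> 'v set" where
  "off_path s = {v \<in> V. \<gamma> v = s \<and> v \<notin> set \<pi>}"

lemma finite_V: "finite V" and acyclic_E: "acyclic E" and edges_in_V: "E \<subseteq> V \<times> V"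
  and src_in_V: "src \<in> V" and pre_src: "pre E src = {}"
  using task by (simp_all add: typed_dag_task_def)

lemma finite_off_path: "finite (off_path s)"
  using finite_V by (simp add: off_path_def)

lemma path_edge: "Suc i < length \<pi> \<Longrightarrow> (\<pi> ! i, \<pi> ! Suc i) \<in> E"
  using critical by (auto simp: critical_path_def complete_path_def)

lemma path_hd: "\<pi> ! 0 = src"
  using critical by (auto simp: critical_path_def complete_path_def hd_conv_nth)

lemma nth_in_V: "i < length \<pi> \<Longrightarrow> \<pi> ! i \<in> V"
  using src_in_V path_hd path_edge[of "i - 1"] edges_in_V by (cases i) auto

lemma release_nth: "i < length \<pi> \<Longrightarrow> release E f (\<pi> ! i) = prev_finish f \<pi> i"
proof (cases i)
  case 0
  then show ?thesis
    using pre_src path_hd by (simp add: release_def prev_finish_def)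
next
  case (Suc k)
  assume i: "i < length \<pi>"
  have "\<pi> ! k \<in> pre E (\<pi> ! i)"
    using path_edge[of k] i Suc by (simp add: pre_def)
  moreover have "f (\<pi> ! k) = Max (f ` pre E (\<pi> ! i))"
    using critical i Suc unfolding critical_path_def by (metis diff_Suc_1 zero_less_Suc)
  ultimately show ?thesis
    using Suc by (auto simp: release_def prev_finish_def)
qed

lemma prev_finish_le_finish: "i < length \<pi> \<Longrightarrow> prev_finish f \<pi> i \<le> f (\<pi> ! i)"
  using exec_seq_release_le_finish[OF exec nth_in_V] release_nth by simp

lemma exec_set_nth_subset_window:
  "i < length \<pi> \<Longrightarrow> exec_set sched (\<pi> ! i) \<subseteq> path_window f \<pi> i"
  using exec_seq_exec_set_subset[OF exec nth_in_V] release_nth by (simp add: path_window_def)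

lemma finish_mono: "i \<le> j \<Longrightarrow> j < length \<pi> \<Longrightarrow> f (\<pi> ! i) \<le> f (\<pi> ! j)"
proof (induction j rule: dec_induct)
  case (step j)
  then have "f (\<pi> ! j) \<le> f (\<pi> ! Suc j)"
    using prev_finish_le_finish[of "Suc j"] by (simp add: prev_finish_def)
  then show ?case
    using step by simp
qed simp

lemma finish_le_prev_finish: "i < k \<Longrightarrow> k < length \<pi> \<Longrightarrow> f (\<pi> ! i) \<le> prev_finish f \<pi> k"
  using finish_mono[of i "k - 1"] by (simp add: prev_finish_def)

lemma path_window_unique:
  assumes "i < length \<pi>" "k < length \<pi>" "t \<in> path_window f \<pi> i" "t \<in> path_window f \<pi> k"
  shows "i = k"
  using finish_le_prev_finish[of i k] finish_le_prev_finish[of k i] assms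
  unfolding path_window_def by (cases i k rule: linorder_cases) auto

lemma path_x_eq_measure: "i < length \<pi> \<Longrightarrow> path_x sched f \<pi> i = measure lborel (exec_set sched (\<pi> ! i))"
  using exec_set_nth_subset_window unfolding path_x_def path_window_def by (simp add: Int_absorb2)

lemma idle_set_measurable: "i < length \<pi> \<Longrightarrow> idle_set sched f \<pi> i \<in> sets lborel"
  using exec_seq_exec_set_measurable[OF exec nth_in_V] by (simp add: idle_set_def path_window_def)

lemma emeasure_idle_set_finite: "emeasure lborel (idle_set sched f \<pi> i) < \<infinity>"
proof -
  have "bounded (idle_set sched f \<pi> i)"
    by (rule bounded_subset[of "path_window f \<pi> i"]) (auto simp: idle_set_def path_window_def)
  then show ?thesis
    by (rule emeasure_bounded_finite)
qed

lemma path_y_eq_measure: "i < length \<pi> \<Longrightarrow> path_y sched f \<pi> i = measure lborel (idle_set sched f \<pi> i)"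
  using measure_Diff[of lborel "path_window f \<pi> i" "exec_set sched (\<pi> ! i)"]
    exec_set_nth_subset_window exec_seq_exec_set_measurable[OF exec nth_in_V]
    prev_finish_le_finish path_x_eq_measure
  by (simp add: path_y_def idle_set_def path_window_def)

text \<open>A path vertex running at \<open>t\<close> would have \<open>t\<close> in its window, hence be \<open>\<tau>\<^sub>i\<close>
  by disjointness of windows; but \<open>\<tau>\<^sub>i\<close> is idle at \<open>t\<close>.\<close>
lemma busy_cores_off_path:
  assumes i: "i < length \<pi>" and t: "t \<in> idle_set sched f \<pi> i"
  shows "M (\<gamma> (\<pi> ! i)) \<le> card {v \<in> off_path (\<gamma> (\<pi> ! i)). t \<in> exec_set sched v}"
proof -
  let ?s = "\<gamma> (\<pi> ! i)"
  define g where "g j = the (sched t ?s j)" for j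
  have busy: "sched t ?s j = Some (g j)" if "j < M ?s" for j
    using exec_seq_work_conserving[OF exec nth_in_V[OF i], of t j] release_nth[OF i] t that
    unfolding g_def idle_set_def path_window_def exec_set_def by auto
  then have runs: "t \<in> exec_set sched (g j)" if "j < M ?s" for j
    using that unfolding exec_set_def executing_def by blast
  have "g j \<notin> set \<pi>" if j: "j < M ?s" for j
  proof
    assume "g j \<in> set \<pi>"
    then obtain k where k: "k < length \<pi>" and gk: "g j = \<pi> ! k"
      by (auto simp: in_set_conv_nth)
    then have "k = i"
      using path_window_unique[OF k i] exec_set_nth_subset_window[OF k] runs[OF j] t
      by (auto simp: idle_set_def)
    then show False
      using runs[OF j] gk t by (simp add: idle_set_def)
  qed
  then have "g ` {..<M ?s} \<subseteq> {v \<in> off_path ?s. t \<in> exec_set sched v}"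
    using exec_seq_sched_SomeD[OF exec busy] runs by (auto simp: off_path_def)
  have "inj_on g {..<M ?s}"
    using busy exec_seq_core_unique[OF exec] by (metis inj_onI lessThan_iff)
  then have "M ?s = card (g ` {..<M ?s})"
    by (simp add: card_image)
  also have "\<dots> \<le> card {v \<in> off_path ?s. t \<in> exec_set sched v}"
    using \<open>g ` {..<M ?s} \<subseteq> _\<close> finite_off_path by (intro card_mono) auto
  finally show ?thesis .
qed

lemma idle_count_le_off_path_count:
  "real (M s) * (\<Sum>i | i < length \<pi> \<and> \<gamma> (\<pi> ! i) = s. indicator (idle_set sched f \<pi> i) t)
     \<le> (\<Sum>v\<in>off_path s. indicator (exec_set sched v) t :: real)"
  (is "_ * (\<Sum>i\<in>?I. _) \<le> _")
proof (cases "\<exists>i\<in>?I. t \<in> idle_set sched f \<pi> i")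
  case False
  then show ?thesis
    by (simp add: indicator_def sum_nonneg)
next
  case True
  then obtain i where "i \<in> ?I" and t: "t \<in> idle_set sched f \<pi> i"
    by blast
  then have i: "i < length \<pi>" and s: "\<gamma> (\<pi> ! i) = s"
    by auto
  have "disjoint_family_on (idle_set sched f \<pi>) ?I"
    using path_window_unique unfolding disjoint_family_on_def idle_set_def by blast
  then have "(\<Sum>i\<in>?I. indicator (idle_set sched f \<pi> i) t) = (1::real)"
    using sum_indicator_disjoint_family[where f = "\<lambda>_. 1"] t \<open>i \<in> ?I\<close> by fastforce
  then show ?thesis
    using busy_cores_off_path[OF i t] s finite_off_path
    by (simp add: indicator_def of_bool_def sum.If_cases Int_def)
qed

lemma vol_eq_off_path_plus_path:
  "vol V \<gamma> c s = (\<Sum>v\<in>off_path s. c v) + (\<Sum>j | j < length \<pi> \<and> \<gamma> (\<pi> ! j) = s. c (\<pi> ! j))"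
proof -
  let ?Q = "{v \<in> set \<pi>. \<gamma> v = s}"
  have "distinct \<pi>"
    using distinct_path_if_acyclic path_edge acyclic_E by blast
  then have "bij_betw (nth \<pi>) {j. j < length \<pi> \<and> \<gamma> (\<pi> ! j) = s} ?Q"
    by (auto simp: bij_betw_def inj_on_nth in_set_conv_nth)
  then have "(\<Sum>j | j < length \<pi> \<and> \<gamma> (\<pi> ! j) = s. c (\<pi> ! j)) = (\<Sum>v\<in>?Q. c v)"
    by (rule sum.reindex_bij_betw)
  moreover have "{v \<in> V. \<gamma> v = s} = off_path s \<union> ?Q"
    using nth_in_V by (auto simp: off_path_def in_set_conv_nth)
  moreover have "(\<Sum>v \<in> off_path s \<union> ?Q. c v) = (\<Sum>v\<in>off_path s. c v) + (\<Sum>v\<in>?Q. c v)"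
    using finite_off_path by (intro sum.union_disjoint) (auto simp: off_path_def)
  ultimately show ?thesis
    unfolding vol_def by simp
qed

lemma sum_path_x_le:
  "(\<Sum>i | i < length \<pi> \<and> \<gamma> (\<pi> ! i) = s. path_x sched f \<pi> i)
     \<le> (\<Sum>j | j < length \<pi> \<and> \<gamma> (\<pi> ! j) = s. c (\<pi> ! j))"
  by (rule sum_mono)
    (use path_x_eq_measure exec_seq_measure_exec_set_le[OF exec nth_in_V] in auto)

lemma sum_path_y_le:
  "real (M s) * (\<Sum>i | i < length \<pi> \<and> \<gamma> (\<pi> ! i) = s. path_y sched f \<pi> i)
     \<le> vol V \<gamma> c s - (\<Sum>j | j < length \<pi> \<and> \<gamma> (\<pi> ! j) = s. c (\<pi> ! j))"
proof -
  have "real (M s) * (\<Sum>i | i < length \<pi> \<and> \<gamma> (\<pi> ! i) = s. path_y sched f \<pi> i)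
      = real (M s) * (\<Sum>i | i < length \<pi> \<and> \<gamma> (\<pi> ! i) = s. measure lborel (idle_set sched f \<pi> i))"
    using path_y_eq_measure by simp
  also have "\<dots> \<le> (\<Sum>v\<in>off_path s. measure lborel (exec_set sched v))"
    using idle_set_measurable emeasure_idle_set_finite
      exec_seq_exec_set_measurable[OF exec] exec_seq_emeasure_exec_set_finite[OF exec]
      idle_count_le_off_path_count finite_off_path
    by (intro sum_measure_le_if_sum_indicator_le) (auto simp: off_path_def)
  also have "\<dots> \<le> (\<Sum>v\<in>off_path s. c v)"
    using exec_seq_measure_exec_set_le[OF exec] by (auto simp: off_path_def intro: sum_mono)
  finally show ?thesis
    using vol_eq_off_path_plus_path by simp
qed

end

theorem lemma1:
  fixes V :: "'v set" and E :: "('v \<times> 'v) set" and S :: "'s set"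
    and \<gamma> :: "'v \<Rightarrow> 's" and c :: "'v \<Rightarrow> real" and src snk :: 'v
    and M :: "'s \<Rightarrow> nat" and sched :: "real \<Rightarrow> 's \<Rightarrow> nat \<Rightarrow> 'v option"
    and f :: "'v \<Rightarrow> real" and \<pi> :: "'v list"
  assumes "typed_dag_task V E S \<gamma> c src snk"
    and "\<forall>s\<in>S. 1 \<le> M s"
    and "exec_seq V E \<gamma> c M sched f"
    and "critical_path E src snk f \<pi>"
  shows "\<forall>s\<in>S.
     (\<Sum>i | i < length \<pi> \<and> \<gamma> (\<pi> ! i) = s. path_x sched f \<pi> i)
        \<le> (\<Sum>j | j < length \<pi> \<and> \<gamma> (\<pi> ! j) = s. c (\<pi> ! j)) \<and>
     (\<Sum>i | i < length \<pi> \<and> \<gamma> (\<pi> ! i) = s. path_y sched f \<pi> i)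
        \<le> (vol V \<gamma> c s - (\<Sum>j | j < length \<pi> \<and> \<gamma> (\<pi> ! j) = s. c (\<pi> ! j))) / real (M s)"
proof -
  interpret critical_path_execution V E S \<gamma> c src snk M sched f \<pi>
    using assms(1,3,4) by unfold_locales
  have "0 < real (M s)" if "s \<in> S" for s
    using assms(2) that by fastforce
  then show ?thesis
    using sum_path_x_le sum_path_y_le by (simp add: pos_le_divide_eq mult.commute)
qed

end
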